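(* Let $\alpha>0$ and let $a_1,\dots,a_N,b_1,\dots,b_{N-1}$ be independent with $a_i\sim\mathcal N(0,\alpha)$, $b_i\ge0$, $b_i^2\sim\frac\alpha2\chi^2(2i/\alpha)$; let $c_i=(b_i^2-i)/\sqrt i$. Let $\theta_N>1$ and for $1\le i\le N$ let $r_i=1+\sqrt{1-\frac{i-1}{N\theta_N^2}}$, $m_i=1-\sqrt{1-\frac{i-1}{N\theta_N^2}}$, $\gamma_i=m_i/r_i$; for $3\le i\le N$ let $\xi_i=\frac{a_i}{\sqrt N\theta_Nr_i}+\sqrt{\frac{m_i}{r_i}}\frac{c_{i-1}}{\sqrt N\theta_Nr_{i-1}}$, and let $L_2=0$, $L_i=\xi_i+\gamma_iL_{i-1}$. Then for any $3\le i\le N$, $L_i\in SG(v_{Li},u_{Li})$ with \[ v_{Li}=\frac{\alpha}{2N\theta_N^2(r_i-1)},\qquad u_{Li}=\frac{\alpha}{N\theta_N^2r_i^2}. \]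
   Context: For $d>0$, $\chi^2(d)$ has density $\frac{1}{2^{d/2}\Gamma(d/2)}x^{d/2-1}e^{-x/2}\mathbf 1_{x>0}$. A centred random variable $X$ belongs to the sub-gamma family $SG(v,u)$ ($v>0$, $u\ge0$) if $\mathbf E e^{tX}\le\exp\!\big(\frac{t^2v}{2(1-u|t|)}\big)$ for all $t$ with $|t|<1/u$ (all $t\in\mathbb R$ if $u=0$). *)

theory Defs
  imports "HOL-Probability.Probability"
begin

definition chi2_density :: "real \<Rightarrow> real \<Rightarrow> real" where
  "chi2_density d x = (if x > 0 then
     1 / (2 powr (d/2) * Gamma (d/2)) * x powr (d/2 - 1) * exp (-x/2) else 0)"

definition sub_gamma :: "'a measure \<Rightarrow> ('a \<Rightarrow> real) \<Rightarrow> real \<Rightarrow> real \<Rightarrow> bool" where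
  "sub_gamma M X v u \<longleftrightarrow> v > 0 \<and> u \<ge> 0 \<and>
     integrable M X \<and> (\<integral>x. X x \<partial>M) = 0 \<and>
     (\<forall>t::real. (u = 0 \<or> \<bar>t\<bar> < 1/u) \<longrightarrow>
        (\<integral>\<^sup>+x. ennreal (exp (t * X x)) \<partial>M) \<le> ennreal (exp (t^2 * v / (2 * (1 - u * \<bar>t\<bar>)))))"

definition r_coef :: "nat \<Rightarrow> real \<Rightarrow> nat \<Rightarrow> real" where
  "r_coef N \<theta> i = 1 + sqrt (1 - real (i - 1) / (real N * \<theta>^2))"

definition m_coef :: "nat \<Rightarrow> real \<Rightarrow> nat \<Rightarrow> real" where
  "m_coef N \<theta> i = 1 - sqrt (1 - real (i - 1) / (real N * \<theta>^2))"

definition gamma_coef :: "nat \<Rightarrow> real \<Rightarrow> nat \<Rightarrow> real" where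
  "gamma_coef N \<theta> i = m_coef N \<theta> i / r_coef N \<theta> i"

definition c_var :: "(nat \<Rightarrow> 'a \<Rightarrow> real) \<Rightarrow> nat \<Rightarrow> 'a \<Rightarrow> real" where
  "c_var b i \<omega> = ((b i \<omega>)^2 - real i) / sqrt (real i)"

definition xi_var :: "nat \<Rightarrow> real \<Rightarrow> (nat \<Rightarrow> 'a \<Rightarrow> real) \<Rightarrow> (nat \<Rightarrow> 'a \<Rightarrow> real) \<Rightarrow> nat \<Rightarrow> 'a \<Rightarrow> real" where
  "xi_var N \<theta> a b i \<omega> =
     a i \<omega> / (sqrt (real N) * \<theta> * r_coef N \<theta> i)
     + sqrt (m_coef N \<theta> i / r_coef N \<theta> i) *
       (c_var b (i - 1) \<omega> / (sqrt (real N) * \<theta> * r_coef N \<theta> (i - 1)))"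

text \<open>L_2 = 0 (and, by convention, L_i = 0 for i \<le> 2), L_i = \<xi>_i + \<gamma>_i L_{i-1} for i \<ge> 3.\<close>
fun L_var :: "nat \<Rightarrow> real \<Rightarrow> (nat \<Rightarrow> 'a \<Rightarrow> real) \<Rightarrow> (nat \<Rightarrow> 'a \<Rightarrow> real) \<Rightarrow> nat \<Rightarrow> 'a \<Rightarrow> real" where
  "L_var N \<theta> a b 0 = (\<lambda>\<omega>. 0)"
| "L_var N \<theta> a b (Suc n) = (if Suc n \<le> 2 then (\<lambda>\<omega>. 0) else
     (\<lambda>\<omega>. xi_var N \<theta> a b (Suc n) \<omega> + gamma_coef N \<theta> (Suc n) * L_var N \<theta> a b n \<omega>))"

end

theory Submission
  imports Defs
begin

text \<open>Sub-gamma bounds are stable under scaling and under sums of independent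
  variables, because the moment generating function of such a sum factorises. The
  Gaussian entry \<open>a\<^sub>i\<close> lies in \<open>SG(\<alpha>, 0)\<close>, and the centred chi-square variable
  \<open>c\<^sub>i\<close> lies in \<open>SG(\<alpha>, \<alpha>/\<surd>i)\<close> by its explicit moment generating function and
  \<open>-ln(1 - x) - x \<le> x\<^sup>2 / (2(1 - |x|))\<close>. Since \<open>\<xi>\<^sub>i\<close> depends only on \<open>a\<^sub>i, b\<^sub>i\<^sub>-\<^sub>1\<close>
  while \<open>L\<^sub>i\<^sub>-\<^sub>1\<close> depends only on \<open>a\<^sub>3, \<dots>, a\<^sub>i\<^sub>-\<^sub>1, b\<^sub>2, \<dots>, b\<^sub>i\<^sub>-\<^sub>2\<close>, the two are
  independent, and the parameters propagate through \<open>L\<^sub>i = \<xi>\<^sub>i + \<gamma>\<^sub>i L\<^sub>i\<^sub>-\<^sub>1\<close> by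
  induction from \<open>L\<^sub>2 = 0\<close>. With \<open>r = r\<^sub>i \<le> r' = r\<^sub>i\<^sub>-\<^sub>1\<close> and \<open>\<gamma>\<^sub>i = (2 - r)/r\<close>
  the variance step is the elementary inequality
  \<open>1/r\<^sup>2 + \<gamma>\<^sub>i/r'\<^sup>2 + \<gamma>\<^sub>i\<^sup>2/(2(r' - 1)) \<le> 1/(2(r - 1))\<close>.\<close>

section \<open>Sub-gamma variables\<close>

lemma sub_gamma_iff:
  "sub_gamma M X v u \<longleftrightarrow> v > 0 \<and> u \<ge> 0 \<and> integrable M X \<and> (\<integral>x. X x \<partial>M) = 0 \<and>
     (\<forall>t. u * \<bar>t\<bar> < 1 \<longrightarrow>
        (\<integral>\<^sup>+x. ennreal (exp (t * X x)) \<partial>M) \<le> ennreal (exp (t^2 * v / (2 * (1 - u * \<bar>t\<bar>)))))"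
proof -
  have "(u = 0 \<or> \<bar>t\<bar> < 1/u) \<longleftrightarrow> u * \<bar>t\<bar> < 1" if "u \<ge> 0" for t :: real
    using that by (cases "u = 0") (auto simp: pos_less_divide_eq mult.commute)
  then show ?thesis
    by (cases "u \<ge> 0") (simp_all add: sub_gamma_def)
qed

lemma sub_gamma_mono:
  assumes "sub_gamma M X v u" "v \<le> v'" "u \<le> u'"
  shows "sub_gamma M X v' u'"
  unfolding sub_gamma_iff
proof (intro conjI allI impI)
  fix t :: real assume t: "u' * \<bar>t\<bar> < 1"
  have ut: "u * \<bar>t\<bar> \<le> u' * \<bar>t\<bar>" using assms(3) by (simp add: mult_right_mono)
  have "(\<integral>\<^sup>+x. ennreal (exp (t * X x)) \<partial>M) \<le> ennreal (exp (t^2 * v / (2 * (1 - u * \<bar>t\<bar>))))"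
    using assms(1) t ut unfolding sub_gamma_iff by auto
  also have "\<dots> \<le> ennreal (exp (t^2 * v' / (2 * (1 - u' * \<bar>t\<bar>))))"
    using assms t ut unfolding sub_gamma_iff
    by (intro ennreal_leI exp_mono frac_le mult_left_mono mult_nonneg_nonneg) auto
  finally show "(\<integral>\<^sup>+x. ennreal (exp (t * X x)) \<partial>M) \<le> ennreal (exp (t^2 * v' / (2 * (1 - u' * \<bar>t\<bar>))))" .
qed (use assms in \<open>auto simp: sub_gamma_iff\<close>)

lemma sub_gamma_cmult:
  assumes "sub_gamma M X v u" "c \<noteq> 0"
  shows "sub_gamma M (\<lambda>x. c * X x) (c^2 * v) (\<bar>c\<bar> * u)"
  unfolding sub_gamma_iff
proof (intro conjI allI impI)
  fix t :: real assume "\<bar>c\<bar> * u * \<bar>t\<bar> < 1"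
  then have "u * \<bar>t * c\<bar> < 1" by (simp add: abs_mult mult_ac)
  then have "(\<integral>\<^sup>+x. ennreal (exp ((t * c) * X x)) \<partial>M) \<le> ennreal (exp ((t * c)^2 * v / (2 * (1 - u * \<bar>t * c\<bar>))))"
    using assms(1) unfolding sub_gamma_iff by blast
  then show "(\<integral>\<^sup>+x. ennreal (exp (t * (c * X x))) \<partial>M) \<le> ennreal (exp (t^2 * (c^2 * v) / (2 * (1 - \<bar>c\<bar> * u * \<bar>t\<bar>))))"
    by (simp add: abs_mult power_mult_distrib mult_ac)
qed (use assms in \<open>auto simp: sub_gamma_iff\<close>)

lemma (in prob_space) indep_var_nn_integral:
  fixes X Y :: "'a \<Rightarrow> ennreal"
  assumes "indep_var borel X borel Y"
  shows "(\<integral>\<^sup>+\<omega>. X \<omega> * Y \<omega> \<partial>M) = (\<integral>\<^sup>+\<omega>. X \<omega> \<partial>M) * (\<integral>\<^sup>+\<omega>. Y \<omega> \<partial>M)"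
proof -
  have "indep_vars (\<lambda>_. borel) (case_bool X Y) UNIV"
    using assms unfolding indep_var_def
    by (rule indep_vars_cong[THEN iffD1, rotated 3]) (auto split: bool.split)
  from indep_vars_nn_integral[OF _ this] show ?thesis
    by (simp add: UNIV_bool mult.commute)
qed

lemma (in prob_space) sub_gamma_add:
  assumes "indep_var borel X borel Y" "sub_gamma M X v1 u" "sub_gamma M Y v2 u"
  shows "sub_gamma M (\<lambda>x. X x + Y x) (v1 + v2) u"
  unfolding sub_gamma_iff
proof (intro conjI allI impI)
  fix t :: real assume t: "u * \<bar>t\<bar> < 1"
  have [measurable]: "X \<in> borel_measurable M" "Y \<in> borel_measurable M"
    using assms unfolding sub_gamma_iff by auto
  have "(\<integral>\<^sup>+x. ennreal (exp (t * (X x + Y x))) \<partial>M)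
      = (\<integral>\<^sup>+x. ennreal (exp (t * X x)) * ennreal (exp (t * Y x)) \<partial>M)"
    by (simp add: distrib_left exp_add ennreal_mult)
  also have "\<dots> = (\<integral>\<^sup>+x. ennreal (exp (t * X x)) \<partial>M) * (\<integral>\<^sup>+x. ennreal (exp (t * Y x)) \<partial>M)"
    using indep_var_compose[OF assms(1), of "\<lambda>y. ennreal (exp (t * y))" borel "\<lambda>y. ennreal (exp (t * y))" borel]
    by (intro indep_var_nn_integral) (simp add: comp_def)
  also have "\<dots> \<le> ennreal (exp (t^2 * v1 / (2 * (1 - u * \<bar>t\<bar>)))) * ennreal (exp (t^2 * v2 / (2 * (1 - u * \<bar>t\<bar>))))"
    using assms(2,3) t unfolding sub_gamma_iff by (intro mult_mono) auto
  also have "\<dots> = ennreal (exp (t^2 * (v1 + v2) / (2 * (1 - u * \<bar>t\<bar>))))"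
    by (simp add: ennreal_mult[symmetric] exp_add[symmetric] add_divide_distrib distrib_left)
  finally show "(\<integral>\<^sup>+x. ennreal (exp (t * (X x + Y x))) \<partial>M) \<le> ennreal (exp (t^2 * (v1 + v2) / (2 * (1 - u * \<bar>t\<bar>))))" .
qed (use assms in \<open>auto simp: sub_gamma_iff\<close>)

lemma (in prob_space) sub_gamma_lincomb:
  assumes ind: "indep_var borel X borel Y" and X: "sub_gamma M X v1 u1" and Y: "sub_gamma M Y v2 u2"
    and c: "c1 \<noteq> 0" "c2 \<noteq> 0" and v: "c1^2 * v1 + c2^2 * v2 \<le> v"
    and u: "\<bar>c1\<bar> * u1 \<le> u" "\<bar>c2\<bar> * u2 \<le> u"
  shows "sub_gamma M (\<lambda>x. c1 * X x + c2 * Y x) v u"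
proof -
  have ind': "indep_var borel (\<lambda>x. c1 * X x) borel (\<lambda>x. c2 * Y x)"
    using indep_var_compose[OF ind, of "\<lambda>y. c1 * y" borel "\<lambda>y. c2 * y" borel] by (simp add: comp_def)
  have X': "sub_gamma M (\<lambda>x. c1 * X x) (c1^2 * v1) u"
    by (rule sub_gamma_mono[OF sub_gamma_cmult[OF X c(1)] order_refl u(1)])
  have Y': "sub_gamma M (\<lambda>x. c2 * Y x) (c2^2 * v2) u"
    by (rule sub_gamma_mono[OF sub_gamma_cmult[OF Y c(2)] order_refl u(2)])
  show ?thesis
    by (rule sub_gamma_mono[OF sub_gamma_add[OF ind' X' Y'] v order_refl])
qed

lemma (in prob_space) sub_gamma_zero:
  assumes "v > 0" "u \<ge> 0"
  shows "sub_gamma M (\<lambda>_. 0) v u"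
  using assms by (auto simp: sub_gamma_iff emeasure_space_1 intro!: divide_nonneg_pos mult_nonneg_nonneg)

section \<open>Gaussian and centred chi-square variables\<close>

lemma (in prob_space) sub_gamma_normal:
  assumes \<sigma>: "\<sigma> > 0" and X: "distributed M lborel X (normal_density 0 \<sigma>)"
  shows "sub_gamma M X (\<sigma>^2) 0"
  unfolding sub_gamma_iff
proof (intro conjI allI impI)
  show "integrable M X"
    by (rule distributed_integrable_var[OF X]) (auto intro: integrable_normal_moment_nz_1[OF \<sigma>])
  show "(\<integral>x. X x \<partial>M) = 0"
    using normal_distributed_expectation[OF \<sigma> X] .
  fix t :: real
  have [measurable]: "X \<in> borel_measurable M"
    using X by (auto dest: distributed_measurable)
  have tilt: "normal_density 0 \<sigma> x * exp (t * x) = exp (t^2 * \<sigma>^2 / 2) * normal_density (t * \<sigma>^2) \<sigma> x" for x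
    using \<sigma> unfolding normal_density_def by (simp add: mult_exp_exp power2_eq_square field_simps)
  interpret tilted: prob_space "density lborel (normal_density (t * \<sigma>^2) \<sigma>)"
    using prob_space_normal_density[OF \<sigma>] .
  have "(\<integral>\<^sup>+x. ennreal (exp (t * X x)) \<partial>M) = (\<integral>\<^sup>+x. ennreal (normal_density 0 \<sigma> x) * ennreal (exp (t * x)) \<partial>lborel)"
    by (rule distributed_nn_integral[OF X, symmetric]) auto
  also have "\<dots> = (\<integral>\<^sup>+x. ennreal (exp (t^2 * \<sigma>^2 / 2)) * ennreal (normal_density (t * \<sigma>^2) \<sigma> x) \<partial>lborel)"
    using \<sigma> by (simp add: ennreal_mult'[symmetric] tilt)
  also have "\<dots> = ennreal (exp (t^2 * \<sigma>^2 / 2))"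
    using tilted.emeasure_space_1 by (simp add: nn_integral_cmult emeasure_density)
  finally show "(\<integral>\<^sup>+x. ennreal (exp (t * X x)) \<partial>M) \<le> ennreal (exp (t^2 * \<sigma>^2 / (2 * (1 - 0 * \<bar>t\<bar>))))"
    by simp
qed (use \<sigma> in auto)

lemma nn_integral_powr_exp:
  fixes k l :: real assumes k: "k > 0" and l: "l > 0"
  shows "(\<integral>\<^sup>+x. ennreal (indicator {0<..} x * x powr (k - 1) * exp (- (l * x))) \<partial>lborel)
    = ennreal (Gamma k / l powr k)"
proof -
  let ?f = "\<lambda>l x. ennreal (indicator {0<..} x * x powr (k - 1) * exp (- (l * x)))"
  have "(\<integral>\<^sup>+x. ennreal (indicator {0..} x * (x powr (k - 1) / exp x)) \<partial>lborel) = ennreal (Gamma k)"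
    by (rule nn_integral_has_integral_lebesgue[OF _ Gamma_integral_real[OF k]]) auto
  also have "(\<lambda>x. ennreal (indicator {0..} x * (x powr (k - 1) / exp x))) = ?f 1"
    by (auto simp: fun_eq_iff indicator_def exp_minus field_simps)
  finally have Gamma: "integral\<^sup>N lborel (?f 1) = ennreal (Gamma k)" .
  have "integral\<^sup>N lborel (?f l) = ennreal (1 / l) * (\<integral>\<^sup>+x. ?f l (0 + (1 / l) * x) \<partial>lborel)"
    using nn_integral_real_affine[of "?f l" "1 / l" 0] l by simp
  also have "(\<lambda>x. ?f l (0 + (1 / l) * x)) = (\<lambda>x. ennreal (l powr (1 - k)) * ?f 1 x)"
  proof
    fix x :: real
    show "?f l (0 + (1 / l) * x) = ennreal (l powr (1 - k)) * ?f 1 x"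
    proof (cases "x > 0")
      case True
      then have "(x / l) powr (k - 1) = l powr (1 - k) * x powr (k - 1)"
        using l by (simp add: powr_divide powr_minus_divide[symmetric] powr_diff divide_simps)
      then show ?thesis using True l by (simp add: ennreal_mult[symmetric] indicator_def)
    qed (use l in \<open>simp add: indicator_def zero_less_mult_iff zero_less_divide_iff\<close>)
  qed
  also have "(\<integral>\<^sup>+x. ennreal (l powr (1 - k)) * ?f 1 x \<partial>lborel) = ennreal (l powr (1 - k)) * ennreal (Gamma k)"
    by (subst nn_integral_cmult) (measurable, simp only: Gamma)
  also have "ennreal (1 / l) * (ennreal (l powr (1 - k)) * ennreal (Gamma k)) = ennreal (Gamma k / l powr k)"
    using l k by (simp add: ennreal_mult[symmetric] powr_diff Gamma_real_pos field_simps)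
  finally show ?thesis .
qed

lemma chi2_density_nonneg: "d > 0 \<Longrightarrow> chi2_density d x \<ge> 0"
  by (simp add: chi2_density_def Gamma_real_pos)

lemma borel_measurable_chi2_density [measurable]: "chi2_density d \<in> borel_measurable borel"
  unfolding chi2_density_def by measurable

lemma nn_integral_chi2_density_exp:
  fixes d s :: real assumes d: "d > 0" and s: "s < 1/2"
  shows "(\<integral>\<^sup>+x. ennreal (chi2_density d x) * ennreal (exp (s * x)) \<partial>lborel) = ennreal ((1 - 2 * s) powr (-(d/2)))"
proof -
  define k where "k = d / 2"
  have k: "k > 0" using d by (simp add: k_def)
  define C where "C = 1 / (2 powr k * Gamma k)"
  have C: "C > 0" using k by (simp add: C_def Gamma_real_pos)
  have "ennreal (chi2_density d x) * ennreal (exp (s * x))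
      = ennreal C * ennreal (indicator {0<..} x * x powr (k - 1) * exp (- ((1/2 - s) * x)))" for x
  proof (cases "x > 0")
    case True
    then have "chi2_density d x * exp (s * x) = C * (x powr (k - 1) * exp (- ((1/2 - s) * x)))"
      unfolding chi2_density_def C_def k_def by (simp add: mult_exp_exp algebra_simps)
    then show ?thesis
      using True C chi2_density_nonneg[OF d] by (simp add: ennreal_mult[symmetric] indicator_def)
  qed (simp add: chi2_density_def)
  then have "(\<integral>\<^sup>+x. ennreal (chi2_density d x) * ennreal (exp (s * x)) \<partial>lborel)
     = ennreal C * ennreal (Gamma k / (1/2 - s) powr k)"
    using nn_integral_powr_exp[OF k, of "1/2 - s"] s by (simp add: nn_integral_cmult)
  also have "\<dots> = ennreal ((1 - 2 * s) powr (-(d/2)))"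
  proof -
    have "C * (Gamma k / (1/2 - s) powr k) = 1 / (2 powr k * (1/2 - s) powr k)"
      using Gamma_real_pos[OF k] by (simp add: C_def)
    also have "\<dots> = (1 - 2 * s) powr (-(d/2))"
      using s by (simp add: k_def powr_mult[symmetric] powr_minus_divide algebra_simps)
    finally show ?thesis
      using C k s by (simp add: ennreal_mult[symmetric] Gamma_real_pos)
  qed
  finally show ?thesis .
qed

lemma chi2_density_mult_self:
  assumes d: "d > 0"
  shows "x * chi2_density d x = d * chi2_density (d + 2) x"
proof (cases "x > 0")
  case True
  define k where "k = d / 2"
  have k: "k > 0" "d = 2 * k" "(d + 2) / 2 = k + 1" using d by (simp_all add: k_def)
  have G: "Gamma (k + 1) = k * Gamma k"
    using k Gamma_real_pos[of k] by (intro Gamma_plus1) (auto simp: Gamma_eq_zero_iff)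
  have "chi2_density (d + 2) x = x * (x powr (k - 1) * exp (- x / 2)) / (2 * 2 powr k * (k * Gamma k))"
    using True unfolding chi2_density_def k(3) G by (simp add: powr_add powr_diff)
  moreover have "chi2_density d x = x powr (k - 1) * exp (- x / 2) / (2 powr k * Gamma k)"
    using True unfolding chi2_density_def k_def by simp
  ultimately show ?thesis
    using k Gamma_real_pos[of k] by (simp add: field_simps)
qed (simp add: chi2_density_def)

lemma minus_ln_one_minus_le:
  fixes x :: real assumes x: "\<bar>x\<bar> < 1"
  shows "- ln (1 - x) - x \<le> x^2 / (2 * (1 - \<bar>x\<bar>))"
proof (cases "x \<ge> 0")
  case True
  define h where "h w = 1 / (2 * w) - w / 2 + ln w" for w :: real
  have "h 1 \<le> h (1 - x)"
  proof (rule DERIV_nonpos_imp_nonincreasing[where f = h])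
    fix w assume w: "1 - x \<le> w" "w \<le> 1"
    then have "w > 0" using x by linarith
    then have "(h has_real_derivative - ((1 - w)^2 / (2 * w^2))) (at w)"
      unfolding h_def by (auto intro!: derivative_eq_intros simp: field_simps power2_eq_square)
    then show "\<exists>y. (h has_real_derivative y) (at w) \<and> y \<le> 0" by fastforce
  qed (use True in simp)
  then show ?thesis
    using True x by (simp add: h_def field_simps power2_eq_square)
next
  case False
  define h where "h y = y^2 / 2 - y + ln (1 + y)" for y :: real
  have "h 0 \<le> h (- x)"
  proof (rule DERIV_nonneg_imp_nondecreasing[where f = h])
    fix y assume y: "0 \<le> y" "y \<le> - x"
    then have "(h has_real_derivative y^2 / (1 + y)) (at y)"
      unfolding h_def using x by (auto intro!: derivative_eq_intros simp: field_simps power2_eq_square)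
    then show "\<exists>z. (h has_real_derivative z) (at y) \<and> 0 \<le> z" using x y by auto
  qed (use False in simp)
  then have "- ln (1 - x) - x \<le> x^2 / 2"
    by (simp add: h_def)
  also have "\<dots> \<le> x^2 / (2 * (1 - \<bar>x\<bar>))"
    using x False by (intro divide_left_mono) auto
  finally show ?thesis .
qed

lemma (in prob_space) chi2_distributed_expectation:
  assumes d: "d > 0" and Y: "distributed M lborel Y (chi2_density d)"
  shows "integrable M Y" "expectation Y = d"
proof -
  have moment: "chi2_density d x * x = d * chi2_density (d + 2) x" for x
    using chi2_density_mult_self[OF d, of x] by (simp add: mult.commute)
  have moment_nonneg: "0 \<le> chi2_density d x * x" for x
    using chi2_density_nonneg[of "d + 2" x] d by (simp add: moment)
  have "(\<integral>\<^sup>+x. ennreal (chi2_density d x * x) \<partial>lborel)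
      = ennreal d * (\<integral>\<^sup>+x. ennreal (chi2_density (d + 2) x) * ennreal (exp (0 * x)) \<partial>lborel)"
    using d chi2_density_nonneg[of "d + 2"]
    by (simp add: moment ennreal_mult nn_integral_cmult)
  also have "\<dots> = ennreal d"
    using nn_integral_chi2_density_exp[of "d + 2" 0] d by simp
  finally have first_moment: "(\<integral>\<^sup>+x. ennreal (chi2_density d x * x) \<partial>lborel) = ennreal d" .
  have "integrable lborel (\<lambda>x. chi2_density d x * x)"
    using first_moment moment_nonneg by (intro integrableI_nn_integral_finite) auto
  then show "integrable M Y"
    by (rule distributed_integrable_var[OF Y chi2_density_nonneg[OF d]])
  have "expectation Y = (\<integral>x. chi2_density d x * x \<partial>lborel)"
    using distributed_integral[OF Y, of "\<lambda>x. x"] chi2_density_nonneg[OF d] by simp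
  also have "\<dots> = d"
    using first_moment moment_nonneg d by (subst integral_eq_nn_integral) auto
  finally show "expectation Y = d" .
qed

lemma (in prob_space) sub_gamma_chi2:
  assumes d: "d > 0" and Y: "distributed M lborel Y (chi2_density d)"
  shows "sub_gamma M (\<lambda>x. Y x - d) (2 * d) 2"
  unfolding sub_gamma_iff
proof (intro conjI allI impI)
  show "integrable M (\<lambda>x. Y x - d)"
    using chi2_distributed_expectation[OF d Y] by simp
  show "(\<integral>x. Y x - d \<partial>M) = 0"
    using chi2_distributed_expectation[OF d Y] by (simp add: prob_space)
  have [measurable]: "Y \<in> borel_measurable M"
    using Y by (auto dest: distributed_measurable)
  fix t :: real assume t: "2 * \<bar>t\<bar> < 1"
  have "(\<integral>\<^sup>+x. ennreal (exp (t * (Y x - d))) \<partial>M)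
      = (\<integral>\<^sup>+x. ennreal (chi2_density d x) * ennreal (exp (t * (x - d))) \<partial>lborel)"
    by (rule distributed_nn_integral[OF Y, symmetric]) auto
  also have "\<dots> = (\<integral>\<^sup>+x. ennreal (chi2_density d x) * ennreal (exp (t * x)) \<partial>lborel) * ennreal (exp (- (t * d)))"
    by (subst nn_integral_multc[symmetric])
       (auto simp: right_diff_distrib exp_diff exp_minus divide_inverse ennreal_mult mult.assoc)
  also have "\<dots> = ennreal ((1 - 2 * t) powr (-(d/2)) * exp (- (t * d)))"
    using t by (simp add: nn_integral_chi2_density_exp[OF d] ennreal_mult)
  also have "(1 - 2 * t) powr (-(d/2)) * exp (- (t * d)) = exp (d/2 * (- ln (1 - 2 * t) - 2 * t))"
    using t by (simp add: powr_def exp_add[symmetric] algebra_simps)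
  also have "ennreal \<dots> \<le> ennreal (exp (d/2 * ((2 * t)^2 / (2 * (1 - \<bar>2 * t\<bar>)))))"
    using minus_ln_one_minus_le[of "2 * t"] t d by (intro ennreal_leI exp_mono mult_left_mono) auto
  also have "d/2 * ((2 * t)^2 / (2 * (1 - \<bar>2 * t\<bar>))) = t^2 * (2 * d) / (2 * (1 - 2 * \<bar>t\<bar>))"
    by (simp add: power_mult_distrib abs_mult)
  finally show "(\<integral>\<^sup>+x. ennreal (exp (t * (Y x - d))) \<partial>M) \<le> ennreal (exp (t^2 * (2 * d) / (2 * (1 - 2 * \<bar>t\<bar>))))" .
qed (use d in auto)

section \<open>Independence and coefficients of the recursion\<close>

lemma (in prob_space) indep_var_restrict_compose:
  assumes "indep_vars (\<lambda>_. borel) X I" "A \<inter> B = {}" "A \<subseteq> I" "B \<subseteq> I"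
    and "F \<in> borel_measurable (Pi\<^sub>M A (\<lambda>_. borel))" "G \<in> borel_measurable (Pi\<^sub>M B (\<lambda>_. borel))"
    and "\<And>\<omega>. f \<omega> = F (restrict (\<lambda>i. X i \<omega>) A)" "\<And>\<omega>. g \<omega> = G (restrict (\<lambda>i. X i \<omega>) B)"
  shows "indep_var borel f borel g"
proof -
  have "indep_var borel (F \<circ> (\<lambda>\<omega>. restrict (\<lambda>i. X i \<omega>) A)) borel (G \<circ> (\<lambda>\<omega>. restrict (\<lambda>i. X i \<omega>) B))"
    by (rule indep_var_compose[OF indep_var_restrict[OF assms(1-4)] assms(5,6)])
  moreover have "f = F \<circ> (\<lambda>\<omega>. restrict (\<lambda>i. X i \<omega>) A)" "g = G \<circ> (\<lambda>\<omega>. restrict (\<lambda>i. X i \<omega>) B)"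
    using assms(7,8) by auto
  ultimately show ?thesis by simp
qed

lemma L_var_cong:
  assumes "\<And>j. 3 \<le> j \<Longrightarrow> j \<le> n \<Longrightarrow> a j \<omega> = a' j \<omega>'" "\<And>j. 2 \<le> j \<Longrightarrow> j < n \<Longrightarrow> b j \<omega> = b' j \<omega>'"
  shows "L_var N \<theta> a b n \<omega> = L_var N \<theta> a' b' n \<omega>'"
  using assms by (induction n) (auto simp: xi_var_def c_var_def)

lemma L_var_measurable:
  assumes "\<And>j. 3 \<le> j \<Longrightarrow> j \<le> n \<Longrightarrow> a j \<in> borel_measurable M"
    and "\<And>j. 2 \<le> j \<Longrightarrow> j < n \<Longrightarrow> b j \<in> borel_measurable M"
  shows "L_var N \<theta> a b n \<in> borel_measurable M"
  using assms
proof (induction n)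
  case (Suc n)
  then show ?case
    by (cases "Suc n \<le> 2") (auto simp: xi_var_def c_var_def)
qed simp

lemma r_coef_bounds:
  assumes "1 \<le> \<theta>" "n \<le> N"
  shows "1 < r_coef N \<theta> n" "r_coef N \<theta> n \<le> 2"
proof -
  have "real (n - 1) < real N * \<theta>^2" if "N > 0"
  proof -
    have "real (n - 1) < real N"
      using assms(2) that by simp
    also have "\<dots> \<le> real N * \<theta>^2"
      using assms(1) mult_left_mono[of 1 "\<theta>^2" "real N"] by (simp add: one_le_power)
    finally show ?thesis .
  qed
  then have "real (n - 1) / (real N * \<theta>^2) < 1"
    using assms by (cases "N = 0") auto
  then show "1 < r_coef N \<theta> n" "r_coef N \<theta> n \<le> 2"
    by (auto simp: r_coef_def)
qed

lemma r_coef_antimono: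
  assumes "n' \<le> n"
  shows "r_coef N \<theta> n \<le> r_coef N \<theta> n'"
  using assms unfolding r_coef_def
  by (intro add_left_mono real_sqrt_le_mono diff_left_mono divide_right_mono) auto

lemma gamma_coef_eq:
  assumes "1 \<le> \<theta>" "n \<le> N"
  shows "gamma_coef N \<theta> n = real (n - 1) / (real N * \<theta>^2 * (r_coef N \<theta> n)^2)"
proof (cases "N = 0")
  case False
  define K where "K = real N * \<theta>^2"
  define s where "s = sqrt (1 - real (n - 1) / K)"
  have K: "K > 0"
    using assms False by (simp add: K_def)
  have "real (n - 1) / K < 1"
    using r_coef_bounds(1)[OF assms] by (simp add: r_coef_def K_def)
  then have "0 \<le> s" "s^2 = 1 - real (n - 1) / K"
    by (simp_all add: s_def)
  then have s: "0 < 1 + s" "(1 - s) * (1 + s) = real (n - 1) / K"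
    by (simp_all add: algebra_simps power2_eq_square)
  have "gamma_coef N \<theta> n = (1 - s) * (1 + s) / (1 + s)^2"
    unfolding gamma_coef_def m_coef_def r_coef_def K_def[symmetric] s_def[symmetric]
    using s(1) by (simp add: power2_eq_square)
  also have "\<dots> = real (n - 1) / (K * (1 + s)^2)"
    by (simp only: s(2) divide_divide_eq_left)
  finally show ?thesis
    by (simp add: r_coef_def K_def s_def)
qed (use assms in \<open>simp add: gamma_coef_def m_coef_def\<close>)

lemma gamma_coef_r_coef: "gamma_coef N \<theta> n = (2 - r_coef N \<theta> n) / r_coef N \<theta> n"
  by (simp add: gamma_coef_def m_coef_def r_coef_def)

lemma xi_var_eq:
  assumes "1 \<le> \<theta>" "n \<le> N"
  shows "xi_var N \<theta> a b n = (\<lambda>\<omega>. 1 / (sqrt (real N) * \<theta> * r_coef N \<theta> n) * a n \<omega>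
    + sqrt (real (n - 1)) / (real N * \<theta>^2 * r_coef N \<theta> n * r_coef N \<theta> (n - 1)) * c_var b (n - 1) \<omega>)"
proof -
  have "sqrt (m_coef N \<theta> n / r_coef N \<theta> n) = sqrt (real (n - 1)) / (sqrt (real N) * \<theta> * r_coef N \<theta> n)"
    using gamma_coef_eq[OF assms] r_coef_bounds[OF assms] assms(1)
    by (simp add: gamma_coef_def[symmetric] real_sqrt_divide real_sqrt_mult)
  then show ?thesis
    using r_coef_bounds[OF assms] assms(1)
    by (simp add: xi_var_def fun_eq_iff field_simps power2_eq_square)
qed

lemma variance_step_bound:
  fixes r r' :: real
  assumes r: "1 < r" "r \<le> r'" "r \<le> 2"
  shows "1 / r^2 + (2 - r) / r / r'^2 + ((2 - r) / r)^2 / (2 * (r' - 1)) \<le> 1 / (2 * (r - 1))"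
proof -
  define g where "g = (2 - r) / r"
  have g: "0 \<le> g" "1 + g = 2 / r" "1 - g^2 = 4 * (r - 1) / r^2"
    using r by (auto simp: g_def field_simps power2_eq_square)
  have "g / r'^2 \<le> g / r^2"
    using r g by (intro divide_left_mono power_mono mult_pos_pos) auto
  moreover have "g^2 / (2 * (r' - 1)) \<le> g^2 / (2 * (r - 1))"
    using r by (intro divide_left_mono) auto
  moreover have "1 / r^2 + g / r^2 = 2 / r^3"
    using g(2) r by (simp add: add_divide_distrib[symmetric] field_simps power2_eq_square power3_eq_cube)
  moreover have "1 / (2 * (r - 1)) - g^2 / (2 * (r - 1)) = 2 / r^2"
    using g(3) r by (simp add: diff_divide_distrib[symmetric] field_simps)
  moreover have "2 / r^3 \<le> 2 / r^2"
    using r by (intro divide_left_mono) (auto simp: power2_eq_square power3_eq_cube)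
  ultimately show ?thesis
    unfolding g_def by linarith
qed

section \<open>The tridiagonal model\<close>

locale tridiagonal_model = prob_space M
  for M :: "'a measure" and a b :: "nat \<Rightarrow> 'a \<Rightarrow> real" and \<alpha> \<theta> :: real and N :: nat +
  assumes alpha_pos: "\<alpha> > 0" and theta_gt_1: "\<theta> > 1"
    and indep_entries: "indep_vars (\<lambda>_. borel) (\<lambda>k. case k of Inl j \<Rightarrow> a j | Inr j \<Rightarrow> b j) ({1..N} <+> {1..N-1})"
    and a_normal: "j \<in> {1..N} \<Longrightarrow> distributed M lborel (a j) (normal_density 0 (sqrt \<alpha>))"
    and b_chi2: "j \<in> {1..N-1} \<Longrightarrow> distributed M lborel (\<lambda>\<omega>. (2 / \<alpha>) * (b j \<omega>)^2) (chi2_density (2 * real j / \<alpha>))"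
begin

definition v_L :: "nat \<Rightarrow> real" where
  "v_L n = \<alpha> / (2 * real N * \<theta>^2 * (r_coef N \<theta> n - 1))"

definition u_L :: "nat \<Rightarrow> real" where
  "u_L n = \<alpha> / (real N * \<theta>^2 * (r_coef N \<theta> n)^2)"

lemma sub_gamma_a: "j \<in> {1..N} \<Longrightarrow> sub_gamma M (a j) \<alpha> 0"
  using sub_gamma_normal[OF _ a_normal, of j] alpha_pos by simp

lemma sub_gamma_c_var:
  assumes "j \<in> {1..N-1}"
  shows "sub_gamma M (c_var b j) \<alpha> (\<alpha> / sqrt (real j))"
proof -
  define c where "c = \<alpha> / (2 * sqrt (real j))"
  have j: "real j > 0" "c > 0" using assms alpha_pos by (auto simp: c_def)
  have "sub_gamma M (\<lambda>\<omega>. c * ((2 / \<alpha>) * (b j \<omega>)^2 - 2 * real j / \<alpha>)) (c^2 * (2 * (2 * real j / \<alpha>))) (\<bar>c\<bar> * 2)"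
    using j alpha_pos by (intro sub_gamma_cmult sub_gamma_chi2 b_chi2 assms) auto
  moreover have "(\<lambda>\<omega>. c * ((2 / \<alpha>) * (b j \<omega>)^2 - 2 * real j / \<alpha>)) = c_var b j"
    using j alpha_pos by (auto simp: c_def c_var_def fun_eq_iff field_simps real_sqrt_mult_self)
  moreover have "c^2 * (2 * (2 * real j / \<alpha>)) = \<alpha>" "\<bar>c\<bar> * 2 = \<alpha> / sqrt (real j)"
    using j alpha_pos by (simp_all add: c_def power2_eq_square field_simps)
  ultimately show ?thesis by simp
qed

lemma indep_a_c_var:
  assumes "3 \<le> n" "n \<le> N"
  shows "indep_var borel (a n) borel (c_var b (n - 1))"
  using assms
  by (intro indep_var_restrict_compose[OF indep_entries, of "{Inl n}" "{Inr (n - 1)}"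
        "\<lambda>f. f (Inl n)" "\<lambda>f. ((f (Inr (n - 1)))^2 - real (n - 1)) / sqrt (real (n - 1))"])
     (auto simp: c_var_def)

lemma indep_xi_var_L_var:
  assumes "3 \<le> n" "n \<le> N"
  shows "indep_var borel (xi_var N \<theta> a b n) borel (L_var N \<theta> a b (n - 1))"
proof -
  \<comment> \<open>With coordinate projections in place of \<open>a\<close> and \<open>b\<close>, \<open>\<xi>\<^sub>n\<close> and \<open>L\<^sub>n\<^sub>-\<^sub>1\<close> become
    functions on the product space of the entries they depend on.\<close>
  define a' where "a' = (\<lambda>j (f :: nat + nat \<Rightarrow> real). f (Inl j))"
  define b' where "b' = (\<lambda>j (f :: nat + nat \<Rightarrow> real). f (Inr j))"
  let ?B = "Inl ` {1..n - 1} \<union> Inr ` {1..n - 2}"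
  show ?thesis
  proof (rule indep_var_restrict_compose[OF indep_entries, of "{Inl n, Inr (n - 1)}" ?B
        "xi_var N \<theta> a' b' n" "L_var N \<theta> a' b' (n - 1)"])
    show "xi_var N \<theta> a' b' n \<in> borel_measurable (Pi\<^sub>M {Inl n, Inr (n - 1)} (\<lambda>_. borel))"
      unfolding xi_var_def c_var_def a'_def b'_def by measurable
    show "L_var N \<theta> a' b' (n - 1) \<in> borel_measurable (Pi\<^sub>M ?B (\<lambda>_. borel))"
      using assms by (intro L_var_measurable) (auto simp: a'_def b'_def intro!: measurable_component_singleton)
    show "L_var N \<theta> a b (n - 1) \<omega> = L_var N \<theta> a' b' (n - 1) (restrict (\<lambda>k. (case k of Inl j \<Rightarrow> a j | Inr j \<Rightarrow> b j) \<omega>) ?B)" for \<omega>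
      by (rule L_var_cong) (auto simp: a'_def b'_def)
  qed (use assms in \<open>auto simp: xi_var_def c_var_def a'_def b'_def\<close>)
qed

lemma u_L_step:
  assumes "1 \<le> n" "n \<le> N"
  shows "gamma_coef N \<theta> n * u_L (n - 1) \<le> u_L n"
proof -
  have \<theta>: "1 \<le> \<theta>" using theta_gt_1 by simp
  define K where "K = real N * \<theta>^2"
  define r where "r = r_coef N \<theta> n"
  define r' where "r' = r_coef N \<theta> (n - 1)"
  have K: "K > 0"
    using assms \<theta> by (simp add: K_def)
  have r: "1 < r" "r \<le> r'" "r \<le> 2"
    using r_coef_bounds[OF \<theta> assms(2)] r_coef_antimono[of "n - 1" n N \<theta>] by (simp_all add: r_def r'_def)
  have u_L: "u_L n = \<alpha> / (K * r^2)" "u_L (n - 1) = \<alpha> / (K * r'^2)"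
    by (simp_all add: u_L_def K_def r_def r'_def)
  have "gamma_coef N \<theta> n * u_L (n - 1) \<le> 1 * u_L (n - 1)"
    using r K alpha_pos unfolding gamma_coef_r_coef u_L r_def[symmetric]
    by (intro mult_right_mono) auto
  also have "\<dots> \<le> u_L n"
    using r K alpha_pos unfolding u_L
    by (auto intro!: divide_left_mono mult_left_mono power_mono)
  finally show ?thesis .
qed

lemma v_L_step:
  assumes "1 \<le> n" "n \<le> N"
  shows "u_L n + gamma_coef N \<theta> n * u_L (n - 1) + (gamma_coef N \<theta> n)^2 * v_L (n - 1) \<le> v_L n"
proof -
  have \<theta>: "1 \<le> \<theta>" using theta_gt_1 by simp
  define K where "K = real N * \<theta>^2"
  define r where "r = r_coef N \<theta> n"
  define r' where "r' = r_coef N \<theta> (n - 1)"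
  have K: "K > 0"
    using assms \<theta> by (simp add: K_def)
  have r: "1 < r" "r \<le> r'" "r \<le> 2"
    using r_coef_bounds[OF \<theta> assms(2)] r_coef_antimono[of "n - 1" n N \<theta>] by (simp_all add: r_def r'_def)
  have u_L: "u_L n = \<alpha> / K * (1 / r^2)" "u_L (n - 1) = \<alpha> / K * (1 / r'^2)"
    by (simp_all add: u_L_def K_def r_def r'_def)
  have v_L: "v_L n = \<alpha> / K * (1 / (2 * (r - 1)))" "v_L (n - 1) = \<alpha> / K * (1 / (2 * (r' - 1)))"
    by (simp_all add: v_L_def K_def r_def r'_def)
  have "u_L n + gamma_coef N \<theta> n * u_L (n - 1) + (gamma_coef N \<theta> n)^2 * v_L (n - 1)
      = \<alpha> / K * (1 / r^2 + (2 - r) / r / r'^2 + ((2 - r) / r)^2 / (2 * (r' - 1)))"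
    unfolding u_L v_L gamma_coef_r_coef r_def[symmetric]
    by (simp add: algebra_simps diff_divide_distrib)
  also have "\<dots> \<le> \<alpha> / K * (1 / (2 * (r - 1)))"
    using variance_step_bound[OF r] K alpha_pos by (intro mult_left_mono) auto
  finally show ?thesis
    unfolding v_L .
qed

lemma sub_gamma_xi_var:
  assumes n: "3 \<le> n" "n \<le> N"
  shows "sub_gamma M (xi_var N \<theta> a b n) (u_L n + gamma_coef N \<theta> n * u_L (n - 1)) (u_L n)"
proof -
  have \<theta>: "1 \<le> \<theta>" using theta_gt_1 by simp
  define K where "K = real N * \<theta>^2"
  define r where "r = r_coef N \<theta> n"
  define r' where "r' = r_coef N \<theta> (n - 1)"
  define c1 where "c1 = 1 / (sqrt (real N) * \<theta> * r)"
  define c2 where "c2 = sqrt (real (n - 1)) / (K * r * r')"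
  have K: "K > 0"
    using n \<theta> by (simp add: K_def)
  have r: "1 < r" "r \<le> r'"
    using r_coef_bounds[OF \<theta> n(2)] r_coef_antimono[of "n - 1" n N \<theta>] by (simp_all add: r_def r'_def)
  have u_L: "u_L n = \<alpha> / (K * r^2)" "u_L (n - 1) = \<alpha> / (K * r'^2)"
    by (simp_all add: u_L_def K_def r_def r'_def)
  have xi: "xi_var N \<theta> a b n = (\<lambda>\<omega>. c1 * a n \<omega> + c2 * c_var b (n - 1) \<omega>)"
    using xi_var_eq[OF \<theta> n(2)] by (simp add: c1_def c2_def K_def r_def r'_def)
  show ?thesis
    unfolding xi
  proof (rule sub_gamma_lincomb[OF indep_a_c_var[OF n] sub_gamma_a sub_gamma_c_var])
    show "c1 \<noteq> 0" "c2 \<noteq> 0"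
      using K r n \<theta> by (simp_all add: c1_def c2_def)
    have "c1^2 * \<alpha> = u_L n"
      using \<theta> by (simp add: c1_def u_L K_def power_divide power_mult_distrib)
    moreover have "c2^2 * \<alpha> = gamma_coef N \<theta> n * u_L (n - 1)"
      unfolding c2_def gamma_coef_eq[OF \<theta> n(2)] u_L K_def[symmetric] r_def[symmetric]
      by (simp add: power_divide power_mult_distrib) (simp add: power2_eq_square)
    ultimately show "c1^2 * \<alpha> + c2^2 * \<alpha> \<le> u_L n + gamma_coef N \<theta> n * u_L (n - 1)"
      by simp
    show "\<bar>c1\<bar> * 0 \<le> u_L n"
      using K alpha_pos by (simp add: u_L)
    have "\<bar>c2\<bar> * (\<alpha> / sqrt (real (n - 1))) = \<alpha> / (K * r * r')"
      using K r n by (simp add: c2_def)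
    also have "\<dots> \<le> u_L n"
      using K r alpha_pos by (simp add: u_L power2_eq_square mult.assoc frac_le mult_left_mono)
    finally show "\<bar>c2\<bar> * (\<alpha> / sqrt (real (n - 1))) \<le> u_L n" .
  qed (use n in auto)
qed

lemma sub_gamma_L_var_step:
  assumes n: "3 \<le> n" "n \<le> N"
    and prev: "sub_gamma M (L_var N \<theta> a b (n - 1)) (v_L (n - 1)) (u_L (n - 1))"
  shows "sub_gamma M (L_var N \<theta> a b n) (v_L n) (u_L n)"
proof -
  have "gamma_coef N \<theta> n > 0"
    using gamma_coef_eq[of \<theta> n N] r_coef_bounds[of \<theta> n N] theta_gt_1 n by simp
  moreover obtain m where "n = Suc m" "m \<ge> 2"
    using n by (cases n) auto
  ultimately have L: "L_var N \<theta> a b n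
      = (\<lambda>\<omega>. 1 * xi_var N \<theta> a b n \<omega> + gamma_coef N \<theta> n * L_var N \<theta> a b (n - 1) \<omega>)"
    by simp
  show ?thesis
    unfolding L
    by (rule sub_gamma_lincomb[OF indep_xi_var_L_var[OF n] sub_gamma_xi_var[OF n] prev])
       (use v_L_step[of n] u_L_step[of n] n \<open>gamma_coef N \<theta> n > 0\<close> in auto)
qed

lemma sub_gamma_L_var:
  assumes "2 \<le> n" "n \<le> N"
  shows "sub_gamma M (L_var N \<theta> a b n) (v_L n) (u_L n)"
  using assms
proof (induction n rule: nat_induct_at_least)
  case base
  have "1 < r_coef N \<theta> 2"
    using r_coef_bounds[of \<theta> 2 N] theta_gt_1 base by simp
  then have "v_L 2 > 0" "u_L 2 \<ge> 0"
    using alpha_pos theta_gt_1 base by (simp_all add: v_L_def u_L_def)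
  then show ?case
    by (simp add: numeral_2_eq_2 sub_gamma_zero)
next
  case (Suc n)
  then show ?case
    using sub_gamma_L_var_step[of "Suc n"] by simp
qed

end

theorem lemma5:
  fixes M :: "'a measure" and a b :: "nat \<Rightarrow> 'a \<Rightarrow> real"
    and \<alpha> \<theta> :: real and N i :: nat
  assumes "prob_space M"
    and "\<alpha> > 0" and "\<theta> > 1"
    and "prob_space.indep_vars M (\<lambda>_. borel)
           (\<lambda>k. case k of Inl j \<Rightarrow> a j | Inr j \<Rightarrow> b j) ({1..N} <+> {1..N-1})"
    and "\<And>j. j \<in> {1..N} \<Longrightarrow> distributed M lborel (a j) (normal_density 0 (sqrt \<alpha>))"
    and "\<And>j. j \<in> {1..N-1} \<Longrightarrow> AE \<omega> in M. b j \<omega> \<ge> 0"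
    and "\<And>j. j \<in> {1..N-1} \<Longrightarrow>
           distributed M lborel (\<lambda>\<omega>. (2 / \<alpha>) * (b j \<omega>)^2) (chi2_density (2 * real j / \<alpha>))"
    and "3 \<le> i" and "i \<le> N"
  shows "sub_gamma M (L_var N \<theta> a b i)
           (\<alpha> / (2 * real N * \<theta>^2 * (r_coef N \<theta> i - 1)))
           (\<alpha> / (real N * \<theta>^2 * (r_coef N \<theta> i)^2))"
proof -
  have "tridiagonal_model M a b \<alpha> \<theta> N"
    by (intro tridiagonal_model.intro tridiagonal_model_axioms.intro assms(1-5,7))
  then interpret tridiagonal_model M a b \<alpha> \<theta> N .
  have "sub_gamma M (L_var N \<theta> a b i) (v_L i) (u_L i)"
    using assms(8,9) by (intro sub_gamma_L_var) auto
  then show ?thesis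
    by (simp only: v_L_def u_L_def)
qed

end
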